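(* Let $x\in\mathbb{R}^d$ with $\|x\|_2=1$, let $\ket{x}=\sum_{i\in[d]}x_i\ket{i}$, and let $\delta>0$. Consider the following procedure, given access to a unitary $U:\ket{0}\mapsto\ket{x}$, its controlled version, and QRAM: (1) measure $N=\frac{36\ln d}{\delta^2}$ copies of $\ket{x}$ in the standard basis, let $n_i$ be the number of times outcome $i$ is observed, and store $\sqrt{p_i}=\sqrt{n_i/N}$ in QRAM; (2) create $N$ copies of the state $\frac{1}{\sqrt2}\ket{0}\sum_{i}x_i\ket{i}+\frac{1}{\sqrt2}\ket{1}\sum_i\sqrt{p_i}\ket{i}$; (3) apply a Hadamard gate to the first qubit of each copy, giving $\frac12\sum_i\big((x_i+\sqrt{p_i})\ket{0,i}+(x_i-\sqrt{p_i})\ket{1,i}\big)$; (4) measure both registers of each copy in the standard basis and let $n(0,i)$ be the number of times outcome $(0,i)$ is observed; (5) set $\sigma(i)=+1$ if $n(0,i)>0.4Np_i$ and $\sigma(i)=-1$ otherwise; (6) output the vector $\widetilde{X}$ with $\widetilde{X}_i=\sigma(i)\sqrt{p_i}$. Then, with probability at least $1-\frac{1}{d^{0.83}}$, $\|\widetilde{X}-x\|_\infty<(1+\sqrt2)\delta$.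
   Context: $\ket{i}$ denotes the standard basis vectors; $\|\cdot\|_\infty$ is the maximum absolute value of the coordinates; $\ln$ is the natural logarithm. *)

theory Defs
  imports "HOL-Probability.Probability"
begin

text \<open>Basis indices [d] are represented by the naturals 0..d-1; a vector of R^d by a
  function nat => real, only its values on {..<d} being relevant.\<close>

definition linf_norm :: "nat \<Rightarrow> (nat \<Rightarrow> real) \<Rightarrow> real" where
  "linf_norm d v = Max ((\<lambda>i. \<bar>v i\<bar>) ` {..<d})"

text \<open>Standard-basis measurement of |x> = sum_i x_i |i>: outcome i with probability x_i^2.\<close>
definition meas1 :: "nat \<Rightarrow> (nat \<Rightarrow> real) \<Rightarrow> nat pmf" where
  "meas1 d x = embed_pmf (\<lambda>i. if i < d then (x i)^2 else 0)"

text \<open>Measurement of (1/2) sum_i ((x_i + sqrt p_i)|0,i> + (x_i - sqrt p_i)|1,i>)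
  in the standard basis; the qubit value 0 is False, 1 is True.\<close>
definition meas2 :: "nat \<Rightarrow> (nat \<Rightarrow> real) \<Rightarrow> (nat \<Rightarrow> real) \<Rightarrow> (bool \<times> nat) pmf" where
  "meas2 d x sp = embed_pmf (\<lambda>(b, i). if i < d then
      (if b then ((x i - sp i) / 2)^2 else ((x i + sp i) / 2)^2) else 0)"

definition num_copies :: "nat \<Rightarrow> real \<Rightarrow> nat" where
  "num_copies d \<delta> = nat \<lceil>36 * ln (real d) / \<delta>^2\<rceil>"

definition tomography :: "nat \<Rightarrow> (nat \<Rightarrow> real) \<Rightarrow> real \<Rightarrow> (nat \<Rightarrow> real) pmf" where
  "tomography d x \<delta> = (let N = num_copies d \<delta> in
     do {
       s1 \<leftarrow> Pi_pmf {..<N} 0 (\<lambda>_. meas1 d x);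
       let p = (\<lambda>i. real (card {k \<in> {..<N}. s1 k = i}) / real N);
       s2 \<leftarrow> Pi_pmf {..<N} (False, 0) (\<lambda>_. meas2 d x (\<lambda>i. sqrt (p i)));
       let n0 = (\<lambda>i. real (card {k \<in> {..<N}. s2 k = (False, i)}));
       let \<sigma> = (\<lambda>i. if n0 i > 0.4 * real N * p i then (1::real) else -1);
       return_pmf (\<lambda>i. \<sigma> i * sqrt (p i))
     })"

end

theory Submission
  imports Defs
begin

text \<open>
  Step (1) estimates each |x_i| by sqrt p_i: multiplicative Chernoff bounds for the binomial
  counts n_i give |x_i| - \<delta>/2 < sqrt p_i < |x_i| + \<delta>/3 except with probability
  2 exp (-N \<delta>^2/9) <= 2 d^-4. Given this, if sqrt p_i + |x_i| < (1 + sqrt 2) \<delta> either sign is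
  accurate enough. Otherwise |x_i| and sqrt p_i are both of order \<delta>, and the count n(0,i), of
  mean N ((x_i + sqrt p_i)/2)^2, lies well above the threshold 0.4 N p_i when x_i > 0 and well
  below it when x_i < 0, so a further Chernoff bound makes the chosen sign wrong with probability
  at most d^-4. A union bound over the d coordinates leaves failure probability
  3 d^-3 <= d^-0.83.
\<close>

lemma measure_bind_pmf_le:
  fixes M :: "'a pmf" and N :: "'a \<Rightarrow> 'b pmf"
  assumes "\<And>x. x \<in> set_pmf M \<Longrightarrow> x \<notin> B \<Longrightarrow> measure_pmf.prob (N x) X \<le> c" and "c \<ge> 0"
  shows "measure_pmf.prob (bind_pmf M N) X \<le> measure_pmf.prob M B + c"
proof -
  have "emeasure (measure_pmf (bind_pmf M N)) X = (\<integral>\<^sup>+x. emeasure (measure_pmf (N x)) X \<partial>M)"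
    by simp
  also have "\<dots> \<le> (\<integral>\<^sup>+x. (indicator B x + ennreal c) \<partial>M)"
  proof (intro nn_integral_mono_AE AE_pmfI)
    fix x assume x: "x \<in> set_pmf M"
    show "emeasure (measure_pmf (N x)) X \<le> indicator B x + ennreal c"
    proof (cases "x \<in> B")
      case True
      have "emeasure (measure_pmf (N x)) X \<le> 1"
        by (simp add: measure_pmf.emeasure_le_1)
      with True show ?thesis
        by (simp add: add_increasing2)
    next
      case False
      then show ?thesis
        using assms(1)[OF x False] by (simp add: measure_pmf.emeasure_eq_measure ennreal_leI)
    qed
  qed
  also have "\<dots> = ennreal (measure_pmf.prob M B + c)"
    using assms(2) by (simp add: nn_integral_add measure_pmf.emeasure_eq_measure)
  finally have "ennreal (measure_pmf.prob (bind_pmf M N) X) \<le> ennreal (measure_pmf.prob M B + c)"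
    by (simp add: measure_pmf.emeasure_eq_measure)
  then show ?thesis
    using assms(2) by (subst (asm) ennreal_le_iff) auto
qed

lemma expectation_exp_count_Pi_pmf_le:
  fixes p :: "'a pmf"
  assumes "finite A"
  shows "measure_pmf.expectation (Pi_pmf A dflt (\<lambda>_. p)) (\<lambda>f. exp (l * real (card {k\<in>A. P (f k)})))
     \<le> exp (real (card A) * measure_pmf.prob p {y. P y} * (exp l - 1))"
proof -
  define q where "q = measure_pmf.prob p {y. P y}"
  define g where "g = (\<lambda>y. if P y then exp l else 1)"
  have g_indicator: "g = (\<lambda>y. 1 + (exp l - 1) * indicator {y. P y} y)"
    by (auto simp: g_def indicator_def)
  have g_nonneg: "g y \<ge> 0" for y
    by (simp add: g_def)
  have g_integrable: "integrable (measure_pmf p) g"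
    unfolding g_indicator
    by (intro Bochner_Integration.integrable_add integrable_mult_right integrable_real_indicator)
       (auto simp: measure_pmf.emeasure_eq_measure)
  have exp_count: "exp (l * real (card {k\<in>A. P (f k)})) = (\<Prod>k\<in>A. g (f k))" for f
  proof -
    have "real (card {k\<in>A. P (f k)}) = (\<Sum>k\<in>A. if P (f k) then 1 else 0)"
      using assms by (simp add: sum.inter_filter[symmetric])
    then have "exp (l * real (card {k\<in>A. P (f k)})) = (\<Prod>k\<in>A. exp (l * (if P (f k) then 1 else 0)))"
      using assms by (simp add: sum_distrib_left exp_sum)
    then show ?thesis
      by (auto simp: g_def intro!: prod.cong)
  qed
  have "measure_pmf.expectation (Pi_pmf A dflt (\<lambda>_. p)) (\<lambda>f. exp (l * real (card {k\<in>A. P (f k)})))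
      = measure_pmf.expectation (Pi_pmf A dflt (\<lambda>_. p)) (\<lambda>f. \<Prod>k\<in>A. g (f k))"
    by (simp only: exp_count)
  also have "\<dots> = (\<Prod>k\<in>A. measure_pmf.expectation p g)"
    using assms g_integrable g_nonneg by (intro expectation_prod_Pi_pmf) auto
  also have "\<dots> = (1 + q * (exp l - 1)) ^ card A"
    using g_integrable unfolding g_indicator q_def
    by (subst Bochner_Integration.integral_add)
       (auto intro!: integrable_real_indicator simp: measure_pmf.emeasure_eq_measure mult.commute)
  also have "\<dots> \<le> exp (q * (exp l - 1)) ^ card A"
  proof (rule power_mono)
    have "0 \<le> (1 - q) + q * exp l"
      by (simp add: q_def)
    then show "0 \<le> 1 + q * (exp l - 1)"
      by (simp add: algebra_simps)
  qed (rule exp_ge_add_one_self)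
  also have "\<dots> = exp (real (card A) * q * (exp l - 1))"
    by (simp add: exp_of_nat_mult[symmetric] mult.assoc)
  finally show ?thesis
    unfolding q_def .
qed

lemma prob_Pi_pmf_exp_moment_bound:
  fixes p :: "'a pmf"
  assumes "finite A"
  shows "measure_pmf.prob (Pi_pmf A dflt (\<lambda>_. p)) {f. c \<le> l * real (card {k\<in>A. P (f k)})}
     \<le> exp (- c + real (card A) * measure_pmf.prob p {y. P y} * (exp l - 1))"
proof -
  let ?M = "Pi_pmf A dflt (\<lambda>_. p)"
  let ?u = "\<lambda>f. exp (l * real (card {k\<in>A. P (f k)}))"
  have "?u f \<le> exp (\<bar>l\<bar> * real (card A))" for f
  proof -
    have "real (card {k\<in>A. P (f k)}) \<le> real (card A)"
      using assms by (simp add: card_mono)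
    then show ?thesis
      by (intro exp_mono mult_mono) auto
  qed
  then have "integrable (measure_pmf ?M) ?u"
    by (intro measure_pmf.integrable_const_bound[where B = "exp (\<bar>l\<bar> * real (card A))"]) auto
  then have "measure_pmf.prob ?M {f \<in> space ?M. exp c \<le> ?u f} \<le> measure_pmf.expectation ?M ?u / exp c"
    by (intro integral_Markov_inequality_measure) auto
  also have "\<dots> \<le> exp (real (card A) * measure_pmf.prob p {y. P y} * (exp l - 1)) / exp c"
    using assms by (intro divide_right_mono expectation_exp_count_Pi_pmf_le) auto
  finally show ?thesis
    by (simp add: exp_diff)
qed

lemma prob_Pi_pmf_count_ge_Chernoff:
  fixes p :: "'a pmf"
  assumes "finite A" and "l \<ge> 0"
  shows "measure_pmf.prob (Pi_pmf A dflt (\<lambda>_. p)) {f. a \<le> real (card {k\<in>A. P (f k)})}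
     \<le> exp (- l * a + real (card A) * measure_pmf.prob p {y. P y} * (exp l - 1))"
proof -
  have "measure_pmf.prob (Pi_pmf A dflt (\<lambda>_. p)) {f. a \<le> real (card {k\<in>A. P (f k)})}
     \<le> measure_pmf.prob (Pi_pmf A dflt (\<lambda>_. p)) {f. l * a \<le> l * real (card {k\<in>A. P (f k)})}"
    using assms(2) by (intro measure_pmf.finite_measure_mono) (auto intro: mult_left_mono)
  also have "\<dots> \<le> exp (- (l * a) + real (card A) * measure_pmf.prob p {y. P y} * (exp l - 1))"
    using assms(1) by (rule prob_Pi_pmf_exp_moment_bound)
  finally show ?thesis
    by simp
qed

lemma exp_neg_le_quadratic:
  fixes l :: real
  assumes "l \<ge> 0"
  shows "exp (- l) \<le> 1 - l + l\<^sup>2 / 2"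
proof -
  obtain t where t: "exp (- l) = (\<Sum>m<3. (- l) ^ m / fact m) + exp t / fact 3 * (- l) ^ 3"
    using Maclaurin_exp_le[of "- l" 3] by blast
  have "exp t / fact 3 * (- l) ^ 3 \<le> 0"
    using assms by (simp add: mult_nonneg_nonpos)
  moreover have "(\<Sum>m<3. (- l) ^ m / fact m) = 1 - l + l\<^sup>2 / 2"
    by (simp add: numeral_3_eq_3 power2_eq_square)
  ultimately show ?thesis
    using t by linarith
qed

lemma prob_Pi_pmf_count_le_Chernoff:
  fixes p :: "'a pmf"
  assumes "finite A" and q: "q = measure_pmf.prob p {y. P y}" "q > 0" and "a \<le> q"
  shows "measure_pmf.prob (Pi_pmf A dflt (\<lambda>_. p)) {f. real (card {k\<in>A. P (f k)}) \<le> real (card A) * a}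
     \<le> exp (- (real (card A) * (q - a)\<^sup>2 / (2 * q)))"
proof -
  define N where "N = real (card A)"
  define l where "l = (q - a) / q"
  have "l \<ge> 0"
    using q assms(4) by (simp add: l_def)
  have "measure_pmf.prob (Pi_pmf A dflt (\<lambda>_. p)) {f. real (card {k\<in>A. P (f k)}) \<le> N * a}
     \<le> measure_pmf.prob (Pi_pmf A dflt (\<lambda>_. p)) {f. - l * (N * a) \<le> - l * real (card {k\<in>A. P (f k)})}"
    using \<open>l \<ge> 0\<close> by (intro measure_pmf.finite_measure_mono) (auto intro: mult_left_mono)
  also have "\<dots> \<le> exp (l * (N * a) + N * q * (exp (- l) - 1))"
    using prob_Pi_pmf_exp_moment_bound[OF assms(1), where c = "- l * (N * a)" and l = "- l" and dflt = dflt
        and p = p and P = P] q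
    by (simp add: N_def)
  also have "\<dots> \<le> exp (l * (N * a) + N * q * (- l + l\<^sup>2 / 2))"
    using exp_neg_le_quadratic[OF \<open>l \<ge> 0\<close>] q by (simp add: N_def mult_left_mono)
  also have "l * (N * a) + N * q * (- l + l\<^sup>2 / 2) = - (N * (q - a)\<^sup>2 / (2 * q))"
    using q by (simp add: l_def field_simps power2_eq_square)
  finally show ?thesis
    by (simp add: N_def)
qed

lemma sqrt_shift_Chernoff_exponent_le:
  fixes u e :: real
  assumes "u > 0" and "e > 0"
  shows "- (2 * ln ((u + e) / u)) * (u + e)\<^sup>2 + u\<^sup>2 * (exp (2 * ln ((u + e) / u)) - 1) \<le> - e\<^sup>2"
proof -
  define r where "r = (u + e) / u"
  have "r > 0"
    using assms by (simp add: r_def)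
  have "ln (1 / r) \<le> 1 / r - 1"
    using \<open>r > 0\<close> by (intro ln_le_minus_one) simp
  then have "e \<le> ln r * (u + e)"
    using assms by (simp add: ln_div r_def field_simps)
  then have "e * (2 * (u + e)) \<le> ln r * (u + e) * (2 * (u + e))"
    using assms by (intro mult_right_mono) auto
  moreover have "u\<^sup>2 * (exp (2 * ln r) - 1) = 2 * u * e + e\<^sup>2"
    using assms \<open>r > 0\<close> by (simp add: exp_of_nat_mult[of 2, simplified] r_def field_simps power2_eq_square)
  ultimately show ?thesis
    by (simp add: r_def power2_eq_square algebra_simps)
qed

lemma prob_Pi_pmf_sqrt_frequency_ge:
  fixes p :: "'a pmf"
  assumes "finite A" and "measure_pmf.prob p {y. P y} = u\<^sup>2" and "u \<ge> 0" and "e > 0"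
  shows "measure_pmf.prob (Pi_pmf A dflt (\<lambda>_. p))
     {f. real (card A) * (u + e)\<^sup>2 \<le> real (card {k\<in>A. P (f k)})} \<le> exp (- (real (card A) * e\<^sup>2))"
proof (cases "u = 0")
  case True
  then show ?thesis
    using prob_Pi_pmf_count_ge_Chernoff[OF assms(1), where l = 1 and a = "real (card A) * e\<^sup>2" and dflt = dflt
        and p = p and P = P] assms(2)
    by simp
next
  case False
  define N where "N = real (card A)"
  define l where "l = 2 * ln ((u + e) / u)"
  have "u > 0"
    using False assms(3) by simp
  then have "l \<ge> 0"
    using assms(4) by (simp add: l_def)
  have "N * (- l * (u + e)\<^sup>2 + u\<^sup>2 * (exp l - 1)) \<le> N * - e\<^sup>2"
    using sqrt_shift_Chernoff_exponent_le[OF \<open>u > 0\<close> assms(4)] by (intro mult_left_mono) (simp_all add: l_def N_def)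
  then have "exp (- l * (N * (u + e)\<^sup>2) + N * u\<^sup>2 * (exp l - 1)) \<le> exp (- (N * e\<^sup>2))"
    by (simp add: algebra_simps)
  moreover have "measure_pmf.prob (Pi_pmf A dflt (\<lambda>_. p)) {f. N * (u + e)\<^sup>2 \<le> real (card {k\<in>A. P (f k)})}
      \<le> exp (- l * (N * (u + e)\<^sup>2) + N * u\<^sup>2 * (exp l - 1))"
    using prob_Pi_pmf_count_ge_Chernoff[OF assms(1) \<open>l \<ge> 0\<close>, where dflt = dflt and p = p and P = P] assms(2)
    by (simp add: N_def)
  ultimately show ?thesis
    unfolding N_def by linarith
qed

lemma prob_Pi_pmf_sqrt_frequency_le:
  fixes p :: "'a pmf"
  assumes "finite A" and "measure_pmf.prob p {y. P y} = u\<^sup>2" and "e > 0" and "u \<ge> e"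
  shows "measure_pmf.prob (Pi_pmf A dflt (\<lambda>_. p))
     {f. real (card {k\<in>A. P (f k)}) \<le> real (card A) * (u - e)\<^sup>2} \<le> exp (- (real (card A) * e\<^sup>2 / 2))"
proof -
  define N where "N = real (card A)"
  have "u > 0"
    using assms by simp
  have "(e * u)\<^sup>2 \<le> (u\<^sup>2 - (u - e)\<^sup>2)\<^sup>2"
    using assms by (intro power_mono) (auto simp: power2_eq_square algebra_simps)
  then have "N * e\<^sup>2 / 2 \<le> N * (u\<^sup>2 - (u - e)\<^sup>2)\<^sup>2 / (2 * u\<^sup>2)"
    using \<open>u > 0\<close> by (simp add: N_def field_simps power_mult_distrib mult_left_mono)
  then have "exp (- (N * (u\<^sup>2 - (u - e)\<^sup>2)\<^sup>2 / (2 * u\<^sup>2))) \<le> exp (- (N * e\<^sup>2 / 2))"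
    by simp
  moreover have "measure_pmf.prob (Pi_pmf A dflt (\<lambda>_. p)) {f. real (card {k\<in>A. P (f k)}) \<le> N * (u - e)\<^sup>2}
      \<le> exp (- (N * (u\<^sup>2 - (u - e)\<^sup>2)\<^sup>2 / (2 * u\<^sup>2)))"
    unfolding N_def using \<open>u > 0\<close> assms
    by (intro prob_Pi_pmf_count_le_Chernoff) (auto simp: power2_eq_square algebra_simps)
  ultimately show ?thesis
    unfolding N_def by linarith
qed

lemma pmf_meas1:
  assumes "(\<Sum>i<d. (x i)\<^sup>2) = 1"
  shows "pmf (meas1 d x) i = (if i < d then (x i)\<^sup>2 else 0)"
proof -
  have "(\<integral>\<^sup>+i. ennreal (if i < d then (x i)\<^sup>2 else 0) \<partial>count_space UNIV)
      = (\<Sum>i<d. ennreal ((x i)\<^sup>2))"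
    by (subst nn_integral_count_space'[where A = "{..<d}"]) auto
  also have "\<dots> = 1"
    using assms by (subst sum_ennreal) auto
  finally show ?thesis
    unfolding meas1_def by (subst pmf_embed_pmf) auto
qed

lemma set_pmf_meas1_subset:
  assumes "(\<Sum>i<d. (x i)\<^sup>2) = 1"
  shows "set_pmf (meas1 d x) \<subseteq> {..<d}"
  using pmf_meas1[OF assms] by (auto simp: set_pmf_iff split: if_splits)

lemma pmf_meas2:
  assumes "(\<Sum>i<d. (x i)\<^sup>2) = 1" and "(\<Sum>i<d. (sp i)\<^sup>2) = 1"
  shows "pmf (meas2 d x sp) (b, i) = (if i < d then
      (if b then ((x i - sp i) / 2)\<^sup>2 else ((x i + sp i) / 2)\<^sup>2) else 0)"
proof -
  let ?f = "\<lambda>(b, i). if i < d then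
      (if b then ((x i - sp i) / 2)\<^sup>2 else ((x i + sp i) / 2)\<^sup>2) else (0::real)"
  have "(\<Sum>z\<in>UNIV \<times> {..<d}. ?f z) = (\<Sum>i<d. ((x i - sp i) / 2)\<^sup>2 + ((x i + sp i) / 2)\<^sup>2)"
    by (simp add: sum.cartesian_product[symmetric] UNIV_bool sum.distrib add.commute)
  also have "\<dots> = (\<Sum>i<d. (x i)\<^sup>2 / 2 + (sp i)\<^sup>2 / 2)"
    by (intro sum.cong) (auto simp: power2_eq_square field_simps)
  also have "\<dots> = (\<Sum>i<d. (x i)\<^sup>2) / 2 + (\<Sum>i<d. (sp i)\<^sup>2) / 2"
    by (simp add: sum.distrib sum_divide_distrib)
  finally have "(\<Sum>z\<in>UNIV \<times> {..<d}. ?f z) = 1"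
    using assms by simp
  moreover have "(\<integral>\<^sup>+z. ennreal (?f z) \<partial>count_space UNIV) = (\<Sum>z\<in>UNIV \<times> {..<d}. ennreal (?f z))"
    by (rule nn_integral_count_space') (auto split: if_splits)
  ultimately have "(\<integral>\<^sup>+z. ennreal (?f z) \<partial>count_space UNIV) = 1"
    by (simp add: sum_ennreal split_beta)
  then show ?thesis
    unfolding meas2_def by (subst pmf_embed_pmf) (auto split: prod.splits)
qed

lemma prob_meas2_zero_outcome:
  assumes "(\<Sum>j<d. (x j)\<^sup>2) = 1" and "\<And>j. p j \<ge> 0" and "(\<Sum>j<d. p j) = 1" and "i < d"
  shows "measure_pmf.prob (meas2 d x (\<lambda>j. sqrt (p j))) {y. y = (False, i)} = ((x i + sqrt (p i)) / 2)\<^sup>2"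
proof -
  have "(\<Sum>j<d. (sqrt (p j))\<^sup>2) = 1"
    using assms(2,3) by simp
  then show ?thesis
    using pmf_meas2[OF assms(1)] assms(4) by (simp add: measure_pmf_single)
qed

definition empirical_freq :: "nat \<Rightarrow> (nat \<Rightarrow> 'a) \<Rightarrow> 'a \<Rightarrow> real" where
  "empirical_freq N s y = real (card {k\<in>{..<N}. s k = y}) / real N"

text \<open>Steps (2)-(6) of the procedure, run with the probabilities p stored in step (1).\<close>

definition sign_estimate :: "nat \<Rightarrow> (nat \<Rightarrow> real) \<Rightarrow> nat \<Rightarrow> (nat \<Rightarrow> real) \<Rightarrow> (nat \<Rightarrow> real) pmf" where
  "sign_estimate d x N p = map_pmf
     (\<lambda>s i. (if real (card {k\<in>{..<N}. s k = (False, i)}) > 0.4 * real N * p i then 1 else -1) * sqrt (p i))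
     (Pi_pmf {..<N} (False, 0) (\<lambda>_. meas2 d x (\<lambda>i. sqrt (p i))))"

lemma tomography_eq_bind:
  "tomography d x \<delta> = Pi_pmf {..<num_copies d \<delta>} 0 (\<lambda>_. meas1 d x) \<bind>
     (\<lambda>s. sign_estimate d x (num_copies d \<delta>) (empirical_freq (num_copies d \<delta>) s))"
  unfolding tomography_def sign_estimate_def empirical_freq_def Let_def map_pmf_def by simp

lemma sum_empirical_freq:
  assumes "s \<in> set_pmf (Pi_pmf {..<N} dflt (\<lambda>_. p))" and "set_pmf p \<subseteq> B" and "finite B" and "N > 0"
  shows "(\<Sum>y\<in>B. empirical_freq N s y) = 1"
proof -
  have "s ` {..<N} \<subseteq> B"
    using assms(1,2) by (auto simp: set_Pi_pmf PiE_dflt_def)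
  then have "(\<Sum>y\<in>B. card {k\<in>{..<N}. s k = y}) = N"
    using sum.group[of "{..<N}" B s "\<lambda>_. 1 :: nat"] assms(3) by simp
  then show ?thesis
    using assms(4) unfolding empirical_freq_def
    by (simp flip: sum_divide_distrib of_nat_sum)
qed

lemma below_threshold_gap:
  fixes x s \<delta> :: real
  assumes "\<delta> > 0" and "s \<ge> 0" and "s < x + \<delta> / 3" and "12/5 * \<delta> \<le> x + s"
  shows "0.4 * s\<^sup>2 \<le> ((x + s) / 2)\<^sup>2"
    and "\<delta>\<^sup>2 / 9 \<le> (((x + s) / 2)\<^sup>2 - 0.4 * s\<^sup>2)\<^sup>2 / (2 * ((x + s) / 2)\<^sup>2)"
proof -
  define w where "w = (x + s) / 2"
  have "w \<ge> 6/5 * \<delta>" and "s \<le> 57/50 * w"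
    using assms by (simp_all add: w_def)
  then have "s\<^sup>2 \<le> (57/50 * w)\<^sup>2"
    using assms(2) by (intro power_mono) auto
  then have "s\<^sup>2 \<le> 3249/2500 * w\<^sup>2"
    by (simp add: power2_eq_square)
  then have gap: "w\<^sup>2 - 0.4 * s\<^sup>2 \<ge> 12/25 * w\<^sup>2"
    using zero_le_power2[of w] by linarith
  then show "0.4 * s\<^sup>2 \<le> ((x + s) / 2)\<^sup>2"
    using zero_le_power2[of w] unfolding w_def by linarith
  have "w\<^sup>2 > 0"
    using \<open>w \<ge> 6/5 * \<delta>\<close> assms(1) by simp
  have "(12/25 * w\<^sup>2)\<^sup>2 \<le> (w\<^sup>2 - 0.4 * s\<^sup>2)\<^sup>2"
    using gap \<open>w\<^sup>2 > 0\<close> by (intro power_mono) auto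
  then have "72/625 * w\<^sup>2 \<le> (w\<^sup>2 - 0.4 * s\<^sup>2)\<^sup>2 / (2 * w\<^sup>2)"
    using \<open>w\<^sup>2 > 0\<close> by (simp add: field_simps power2_eq_square)
  moreover have "(6/5 * \<delta>)\<^sup>2 \<le> w\<^sup>2"
    using \<open>w \<ge> 6/5 * \<delta>\<close> assms(1) by (intro power_mono) auto
  then have "36/25 * \<delta>\<^sup>2 \<le> w\<^sup>2"
    by (simp add: power_mult_distrib power_divide)
  ultimately have "\<delta>\<^sup>2 / 9 \<le> (w\<^sup>2 - 0.4 * s\<^sup>2)\<^sup>2 / (2 * w\<^sup>2)"
    using zero_le_power2[of \<delta>] by linarith
  then show "\<delta>\<^sup>2 / 9 \<le> (((x + s) / 2)\<^sup>2 - 0.4 * s\<^sup>2)\<^sup>2 / (2 * ((x + s) / 2)\<^sup>2)"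
    by (simp only: w_def)
qed

lemma above_threshold_gap:
  fixes x s \<delta> :: real
  assumes "\<delta> > 0" and "\<bar>x + s\<bar> < \<delta> / 2" and "12/5 * \<delta> \<le> s - x"
  shows "\<delta>\<^sup>2 / 9 \<le> 0.4 * s\<^sup>2 - 2 * ((x + s) / 2)\<^sup>2"
proof -
  have "s \<ge> 19/20 * \<delta>"
    using assms(2,3) abs_less_iff[of "x + s"] by linarith
  then have "(19/20 * \<delta>)\<^sup>2 \<le> s\<^sup>2"
    using assms(1) by (intro power_mono) auto
  then have "361/400 * \<delta>\<^sup>2 \<le> s\<^sup>2"
    by (simp add: power_mult_distrib power_divide)
  moreover have "((x + s) / 2)\<^sup>2 \<le> (\<delta> / 4)\<^sup>2"
    using assms(1,2) by (subst power2_le_iff_abs_le) auto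
  then have "((x + s) / 2)\<^sup>2 \<le> \<delta>\<^sup>2 / 16"
    by (simp add: power_divide)
  ultimately show ?thesis
    using zero_le_power2[of \<delta>] by linarith
qed

text \<open>
  In step (4) the outcome (0,i) has probability ((x_i + s)/2)^2 with s = sqrt p_i. Once s is
  close to |x_i|, its count stays above the threshold 0.4 N s^2 of step (5) when x_i > 0 and
  below it when x_i < 0, unless |x_i| is so small that either sign is accurate enough.
\<close>

lemma prob_Pi_pmf_count_below_threshold:
  fixes p :: "'a pmf" and x s \<delta> :: real
  assumes "finite A" and q: "measure_pmf.prob p {y. P y} = ((x + s) / 2)\<^sup>2"
    and "\<delta> > 0" "s \<ge> 0" "s < x + \<delta> / 3" "12/5 * \<delta> \<le> x + s"
  shows "measure_pmf.prob (Pi_pmf A dflt (\<lambda>_. p)) {f. real (card {k\<in>A. P (f k)}) \<le> 0.4 * real (card A) * s\<^sup>2}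
     \<le> exp (- (real (card A) * \<delta>\<^sup>2 / 9))"
proof -
  define N where "N = real (card A)"
  define w where "w = (x + s) / 2"
  note gap = below_threshold_gap[OF assms(3-6), folded w_def]
  have "w\<^sup>2 > 0"
    using assms(3,6) by (simp add: w_def)
  have "N * (\<delta>\<^sup>2 / 9) \<le> N * ((w\<^sup>2 - 0.4 * s\<^sup>2)\<^sup>2 / (2 * w\<^sup>2))"
    using gap(2) by (intro mult_left_mono) (simp_all add: N_def)
  then have "exp (- (N * (w\<^sup>2 - 0.4 * s\<^sup>2)\<^sup>2 / (2 * w\<^sup>2))) \<le> exp (- (N * \<delta>\<^sup>2 / 9))"
    by simp
  moreover have "measure_pmf.prob (Pi_pmf A dflt (\<lambda>_. p)) {f. real (card {k\<in>A. P (f k)}) \<le> 0.4 * N * s\<^sup>2}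
      \<le> exp (- (N * (w\<^sup>2 - 0.4 * s\<^sup>2)\<^sup>2 / (2 * w\<^sup>2)))"
    using prob_Pi_pmf_count_le_Chernoff[OF assms(1) q[folded w_def, symmetric] \<open>w\<^sup>2 > 0\<close> gap(1)]
    by (simp add: N_def mult_ac)
  ultimately show ?thesis
    unfolding N_def by linarith
qed

lemma prob_Pi_pmf_count_above_threshold:
  fixes p :: "'a pmf" and x s \<delta> :: real
  assumes "finite A" and q: "measure_pmf.prob p {y. P y} = ((x + s) / 2)\<^sup>2"
    and "\<delta> > 0" "\<bar>x + s\<bar> < \<delta> / 2" "12/5 * \<delta> \<le> s - x"
  shows "measure_pmf.prob (Pi_pmf A dflt (\<lambda>_. p)) {f. 0.4 * real (card A) * s\<^sup>2 \<le> real (card {k\<in>A. P (f k)})}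
     \<le> exp (- (real (card A) * \<delta>\<^sup>2 / 9))"
proof -
  define N where "N = real (card A)"
  have "N * (\<delta>\<^sup>2 / 9) \<le> N * (0.4 * s\<^sup>2 - 2 * ((x + s) / 2)\<^sup>2)"
    using above_threshold_gap[OF assms(3-5)] by (intro mult_left_mono) (simp_all add: N_def)
  moreover have "N * ((x + s) / 2)\<^sup>2 * (exp 1 - 1) \<le> N * ((x + s) / 2)\<^sup>2 * 2"
    using exp_le by (intro mult_left_mono) (auto simp: N_def)
  ultimately have "exp (- (0.4 * N * s\<^sup>2) + N * ((x + s) / 2)\<^sup>2 * (exp 1 - 1)) \<le> exp (- (N * \<delta>\<^sup>2 / 9))"
    by (simp add: algebra_simps)
  moreover have "measure_pmf.prob (Pi_pmf A dflt (\<lambda>_. p)) {f. 0.4 * N * s\<^sup>2 \<le> real (card {k\<in>A. P (f k)})}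
      \<le> exp (- (0.4 * N * s\<^sup>2) + N * ((x + s) / 2)\<^sup>2 * (exp 1 - 1))"
    using prob_Pi_pmf_count_ge_Chernoff[OF assms(1), where l = 1 and a = "0.4 * N * s\<^sup>2" and dflt = dflt
        and p = p and P = P] q
    by (simp add: N_def)
  ultimately show ?thesis
    unfolding N_def by linarith
qed

lemma prob_sign_estimate_error_le:
  fixes x p :: "nat \<Rightarrow> real"
  assumes sq: "(\<Sum>j<d. (x j)\<^sup>2) = 1" and p_nonneg: "\<And>j. p j \<ge> 0" and p_sum: "(\<Sum>j<d. p j) = 1"
    and "i < d" and "\<delta> > 0"
    and close: "\<bar>x i\<bar> - \<delta> / 2 < sqrt (p i)" "sqrt (p i) < \<bar>x i\<bar> + \<delta> / 3"
  shows "measure_pmf.prob (sign_estimate d x N p) {X. (1 + sqrt 2) * \<delta> \<le> \<bar>X i - x i\<bar>}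
     \<le> exp (- (real N * \<delta>\<^sup>2 / 9))"
proof -
  define s where "s = sqrt (p i)"
  define K where "K = (1 + sqrt 2) * \<delta>"
  define M where "M = Pi_pmf {..<N} (False, 0) (\<lambda>_. meas2 d x (\<lambda>j. sqrt (p j)))"
  define n0 where "n0 f = real (card {k\<in>{..<N}. f k = (False, i)})" for f :: "nat \<Rightarrow> bool \<times> nat"
  define err where "err = {f. K \<le> \<bar>(if n0 f > 0.4 * real N * s\<^sup>2 then 1 else -1) * s - x i\<bar>}"
  have "s \<ge> 0"
    using p_nonneg[of i] by (simp add: s_def)
  have "sqrt 2 \<ge> 7/5"
    by (rule real_le_rsqrt) (simp add: power2_eq_square)
  then have "12/5 * \<delta> \<le> K"
    using \<open>\<delta> > 0\<close> by (simp add: K_def algebra_simps)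
  have q: "measure_pmf.prob (meas2 d x (\<lambda>j. sqrt (p j))) {y. y = (False, i)} = ((x i + s) / 2)\<^sup>2"
    using prob_meas2_zero_outcome[OF sq p_nonneg p_sum \<open>i < d\<close>] by (simp add: s_def)
  have error_eq: "measure_pmf.prob (sign_estimate d x N p) {X. K \<le> \<bar>X i - x i\<bar>} = measure_pmf.prob M err"
    using p_nonneg[of i] unfolding sign_estimate_def M_def n0_def err_def by (simp add: vimage_def s_def)
  consider "s + \<bar>x i\<bar> < K" | "K \<le> s + \<bar>x i\<bar>" "x i > 0" | "K \<le> s + \<bar>x i\<bar>" "x i < 0"
    using close(2) \<open>12/5 * \<delta> \<le> K\<close> \<open>\<delta> > 0\<close> by (fastforce simp: s_def)
  then have "measure_pmf.prob M err \<le> exp (- (real N * \<delta>\<^sup>2 / 9))"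
  proof cases
    case 1
    then have "err = {}"
      using \<open>s \<ge> 0\<close> by (auto simp: err_def abs_real_def split: if_splits)
    then show ?thesis
      by simp
  next
    case 2
    have "s < x i + \<delta> / 3" "12/5 * \<delta> \<le> x i + s"
      using 2 close \<open>12/5 * \<delta> \<le> K\<close> by (auto simp: s_def)
    note tail = prob_Pi_pmf_count_below_threshold[OF finite_lessThan q \<open>\<delta> > 0\<close> \<open>s \<ge> 0\<close> this,
        where dflt = "(False, 0)"]
    have "err \<subseteq> {f. n0 f \<le> 0.4 * real N * s\<^sup>2}"
      using 2 close \<open>12/5 * \<delta> \<le> K\<close> \<open>\<delta> > 0\<close> by (auto simp: err_def s_def)
    then have "measure_pmf.prob M err \<le> measure_pmf.prob M {f. n0 f \<le> 0.4 * real N * s\<^sup>2}"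
      by (rule measure_pmf.finite_measure_mono) simp
    also have "\<dots> \<le> exp (- (real N * \<delta>\<^sup>2 / 9))"
      using tail unfolding M_def n0_def by simp
    finally show ?thesis .
  next
    case 3
    have "\<bar>x i + s\<bar> < \<delta> / 2" "12/5 * \<delta> \<le> s - x i"
      using 3 close \<open>12/5 * \<delta> \<le> K\<close> \<open>\<delta> > 0\<close> unfolding abs_less_iff by (auto simp: s_def)
    note tail = prob_Pi_pmf_count_above_threshold[OF finite_lessThan q \<open>\<delta> > 0\<close> this, where dflt = "(False, 0)"]
    have "err \<subseteq> {f. 0.4 * real N * s\<^sup>2 \<le> n0 f}"
      using 3 close \<open>12/5 * \<delta> \<le> K\<close> \<open>\<delta> > 0\<close> by (auto simp: err_def s_def)
    then have "measure_pmf.prob M err \<le> measure_pmf.prob M {f. 0.4 * real N * s\<^sup>2 \<le> n0 f}"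
      by (rule measure_pmf.finite_measure_mono) simp
    also have "\<dots> \<le> exp (- (real N * \<delta>\<^sup>2 / 9))"
      using tail unfolding M_def n0_def by simp
    finally show ?thesis .
  qed
  with error_eq show ?thesis
    by (simp add: K_def)
qed

lemma sqrt_outside_interval:
  fixes f a b :: real
  assumes "f \<ge> 0" and "b \<ge> 0" and "\<not> (a < sqrt f \<and> sqrt f < b)"
  shows "b\<^sup>2 \<le> f \<or> (a \<ge> 0 \<and> f \<le> a\<^sup>2)"
proof (cases "sqrt f < b")
  case True
  then have "sqrt f \<le> a"
    using assms(3) by auto
  moreover have "0 \<le> a"
    using calculation real_sqrt_ge_zero[OF assms(1)] by linarith
  ultimately show ?thesis
    using power_mono[of "sqrt f" a 2] assms(1) by simp
next
  case False
  then show ?thesis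
    using power_mono[of b "sqrt f" 2] assms(1,2) by simp
qed

lemma prob_empirical_freq_sqrt_far:
  assumes sq: "(\<Sum>j<d. (x j)\<^sup>2) = 1" and "i < d" and "\<delta> > 0" and "N > 0"
  shows "measure_pmf.prob (Pi_pmf {..<N} 0 (\<lambda>_. meas1 d x))
     {s. \<not> (\<bar>x i\<bar> - \<delta> / 2 < sqrt (empirical_freq N s i) \<and> sqrt (empirical_freq N s i) < \<bar>x i\<bar> + \<delta> / 3)}
     \<le> 2 * exp (- (real N * \<delta>\<^sup>2 / 9))"
proof -
  define M where "M = Pi_pmf {..<N} 0 (\<lambda>_. meas1 d x)"
  define u where "u = \<bar>x i\<bar>"
  define cnt where "cnt s = real (card {k\<in>{..<N}. s k = i})" for s :: "nat \<Rightarrow> nat"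
  define up where "up = {s. real N * (u + \<delta> / 3)\<^sup>2 \<le> cnt s}"
  define low where "low = {s. cnt s \<le> real N * (u - \<delta> / 2)\<^sup>2 \<and> \<delta> / 2 \<le> u}"
  have q: "measure_pmf.prob (meas1 d x) {y. y = i} = u\<^sup>2"
    using pmf_meas1[OF sq, of i] \<open>i < d\<close> by (simp add: measure_pmf_single u_def)
  have freq: "empirical_freq N s i = cnt s / real N" for s
    by (simp add: empirical_freq_def cnt_def)
  have "{s. \<not> (u - \<delta> / 2 < sqrt (empirical_freq N s i) \<and> sqrt (empirical_freq N s i) < u + \<delta> / 3)}
      \<subseteq> up \<union> low"
  proof
    fix s
    assume "s \<in> {s. \<not> (u - \<delta> / 2 < sqrt (empirical_freq N s i) \<and> sqrt (empirical_freq N s i) < u + \<delta> / 3)}"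
    then have "(u + \<delta> / 3)\<^sup>2 \<le> cnt s / real N \<or> (u - \<delta> / 2 \<ge> 0 \<and> cnt s / real N \<le> (u - \<delta> / 2)\<^sup>2)"
      using \<open>\<delta> > 0\<close> by (intro sqrt_outside_interval) (auto simp: freq cnt_def u_def)
    then show "s \<in> up \<union> low"
      using \<open>N > 0\<close> by (auto simp: up_def low_def field_simps)
  qed
  then have "measure_pmf.prob M {s. \<not> (u - \<delta> / 2 < sqrt (empirical_freq N s i) \<and> sqrt (empirical_freq N s i) < u + \<delta> / 3)}
      \<le> measure_pmf.prob M up + measure_pmf.prob M low"
    by (rule order.trans[OF measure_pmf.finite_measure_mono measure_subadditive])
       (auto simp: measure_pmf.emeasure_eq_measure)
  also have "measure_pmf.prob M up \<le> exp (- (real N * \<delta>\<^sup>2 / 9))"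
    using prob_Pi_pmf_sqrt_frequency_ge[OF finite_lessThan q _ \<open>\<delta> > 0\<close>[THEN divide_pos_pos, of 3], where dflt = 0]
    by (simp add: M_def up_def cnt_def u_def power_divide)
  also have "measure_pmf.prob M low \<le> exp (- (real N * \<delta>\<^sup>2 / 9))"
  proof (cases "\<delta> / 2 \<le> u")
    case True
    then have "measure_pmf.prob M low \<le> exp (- (real N * (\<delta> / 2)\<^sup>2 / 2))"
      using prob_Pi_pmf_sqrt_frequency_le[OF finite_lessThan q _ True, where dflt = 0] \<open>\<delta> > 0\<close>
      by (simp add: M_def low_def cnt_def)
    also have "\<dots> \<le> exp (- (real N * \<delta>\<^sup>2 / 9))"
      by (simp add: power_divide)
    finally show ?thesis .
  qed (simp add: low_def)
  finally show ?thesis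
    by (simp add: M_def u_def)
qed

lemma prob_tomography_coordinate_error:
  assumes sq: "(\<Sum>j<d. (x j)\<^sup>2) = 1" and "i < d" and "\<delta> > 0" and "num_copies d \<delta> > 0"
  shows "measure_pmf.prob (tomography d x \<delta>) {X. (1 + sqrt 2) * \<delta> \<le> \<bar>X i - x i\<bar>}
     \<le> 3 * exp (- (real (num_copies d \<delta>) * \<delta>\<^sup>2 / 9))"
proof -
  define N where "N = num_copies d \<delta>"
  define E where "E = exp (- (real N * \<delta>\<^sup>2 / 9))"
  define M where "M = Pi_pmf {..<N} 0 (\<lambda>_. meas1 d x)"
  define far where "far = {s. \<not> (\<bar>x i\<bar> - \<delta> / 2 < sqrt (empirical_freq N s i)
      \<and> sqrt (empirical_freq N s i) < \<bar>x i\<bar> + \<delta> / 3)}"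
  have "measure_pmf.prob (tomography d x \<delta>) {X. (1 + sqrt 2) * \<delta> \<le> \<bar>X i - x i\<bar>}
      \<le> measure_pmf.prob M far + E"
    unfolding tomography_eq_bind N_def[symmetric] M_def[symmetric]
  proof (rule measure_bind_pmf_le)
    fix s assume "s \<in> set_pmf M" and "s \<notin> far"
    moreover have "(\<Sum>j<d. empirical_freq N s j) = 1"
      using sum_empirical_freq[OF \<open>s \<in> set_pmf M\<close>[unfolded M_def] set_pmf_meas1_subset[OF sq]]
        assms(4) by (simp add: N_def)
    ultimately show "measure_pmf.prob (sign_estimate d x N (empirical_freq N s))
        {X. (1 + sqrt 2) * \<delta> \<le> \<bar>X i - x i\<bar>} \<le> E"
      unfolding E_def far_def using assms
      by (intro prob_sign_estimate_error_le) (auto simp: empirical_freq_def)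
  qed (simp add: E_def)
  also have "\<dots> \<le> 3 * E"
    using prob_empirical_freq_sqrt_far[OF sq \<open>i < d\<close> \<open>\<delta> > 0\<close>, of N] assms(4)
    by (simp add: M_def far_def E_def N_def)
  finally show ?thesis
    by (simp add: E_def N_def)
qed

lemma prob_linf_norm_lt_ge:
  fixes M :: "(nat \<Rightarrow> real) pmf"
  assumes "d > 0" and "\<And>i. i < d \<Longrightarrow> measure_pmf.prob M {X. t \<le> \<bar>X i - x i\<bar>} \<le> c"
  shows "measure_pmf.prob M {X. linf_norm d (\<lambda>i. X i - x i) < t} \<ge> 1 - real d * c"
proof -
  have "linf_norm d v < t \<longleftrightarrow> (\<forall>i<d. \<bar>v i\<bar> < t)" for v
    using \<open>d > 0\<close> unfolding linf_norm_def by (subst Max_less_iff) auto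
  then have "UNIV - {X. linf_norm d (\<lambda>i. X i - x i) < t} = (\<Union>i<d. {X. t \<le> \<bar>X i - x i\<bar>})"
    by (auto simp: not_less)
  then have "1 - measure_pmf.prob M {X. linf_norm d (\<lambda>i. X i - x i) < t}
      = measure_pmf.prob M (\<Union>i<d. {X. t \<le> \<bar>X i - x i\<bar>})"
    using measure_pmf.prob_compl[of "{X. linf_norm d (\<lambda>i. X i - x i) < t}" M] by simp
  also have "\<dots> \<le> (\<Sum>i<d. measure_pmf.prob M {X. t \<le> \<bar>X i - x i\<bar>})"
    by (rule measure_pmf.finite_measure_subadditive_finite) auto
  also have "\<dots> \<le> real d * c"
    using sum_mono[of "{..<d}", OF assms(2)] by simp
  finally show ?thesis
    by simp
qed

lemma ln_le_num_copies:
  assumes "\<delta> > 0"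
  shows "36 * ln (real d) \<le> real (num_copies d \<delta>) * \<delta>\<^sup>2"
proof -
  have "36 * ln (real d) / \<delta>\<^sup>2 \<le> real (num_copies d \<delta>)"
    unfolding num_copies_def by (rule real_nat_ceiling_ge)
  then show ?thesis
    using assms by (simp add: field_simps)
qed

lemma union_bound_le_inverse_powr:
  assumes "d \<ge> 2" and "36 * ln (real d) \<le> real N * \<delta>\<^sup>2"
  shows "real d * (3 * exp (- (real N * \<delta>\<^sup>2 / 9))) \<le> 1 / real d powr 0.83"
proof -
  have "d > 0"
    using assms(1) by simp
  have "exp (- (real N * \<delta>\<^sup>2 / 9)) \<le> exp (- (4 * ln (real d)))"
    using assms(2) by simp
  also have "\<dots> = 1 / real d ^ 4"
    using \<open>d > 0\<close> powr_realpow[of "real d" 4] by (simp add: exp_minus inverse_eq_divide powr_def)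
  finally have "real d * (3 * exp (- (real N * \<delta>\<^sup>2 / 9))) * real d powr 0.83 \<le> real d * (3 / real d ^ 4) * real d"
    using powr_mono[of "0.83" 1 "real d"] assms(1) \<open>d > 0\<close> by (intro mult_mono) auto
  also have "\<dots> = 3 / real d ^ 2"
    using \<open>d > 0\<close> by (simp add: field_simps power2_eq_square power4_eq_xxxx)
  also have "\<dots> \<le> 1"
    using power_mono[of 2 "real d" 2] assms(1) by simp
  finally show ?thesis
    using \<open>d > 0\<close> by (simp add: field_simps)
qed

theorem theorem9:
  fixes d :: nat and x :: "nat \<Rightarrow> real" and \<delta> :: real
  assumes "(\<Sum>i<d. (x i)^2) = 1"
    and "\<delta> > 0"
  shows "measure_pmf.prob (tomography d x \<delta>)
           {X. linf_norm d (\<lambda>i. X i - x i) < (1 + sqrt 2) * \<delta>}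
         \<ge> 1 - 1 / (real d powr 0.83)"
proof -
  have "d \<noteq> 0"
    using assms(1) by (intro notI) simp
  consider "d = 1" | "d \<ge> 2"
    using \<open>d \<noteq> 0\<close> by linarith
  then show ?thesis
  proof cases
    case 1
    then show ?thesis
      by simp
  next
    case 2
    define N where "N = num_copies d \<delta>"
    have N: "36 * ln (real d) \<le> real N * \<delta>\<^sup>2"
      unfolding N_def using assms(2) by (rule ln_le_num_copies)
    moreover have "ln (real d) > 0"
      using 2 by simp
    ultimately have "N > 0"
      by (auto intro: Nat.gr0I)
    have "measure_pmf.prob (tomography d x \<delta>) {X. linf_norm d (\<lambda>i. X i - x i) < (1 + sqrt 2) * \<delta>}
        \<ge> 1 - real d * (3 * exp (- (real N * \<delta>\<^sup>2 / 9)))"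
      using \<open>d \<noteq> 0\<close> prob_tomography_coordinate_error[OF assms(1) _ assms(2)] \<open>N > 0\<close>
      by (intro prob_linf_norm_lt_ge) (auto simp: N_def)
    moreover have "real d * (3 * exp (- (real N * \<delta>\<^sup>2 / 9))) \<le> 1 / real d powr 0.83"
      using 2 N by (rule union_bound_le_inverse_powr)
    ultimately show ?thesis
      by linarith
  qed
qed

end
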